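(* Let the system's knowledge connectivity graph $G_{di}$ belong to $\mathcal{G}_{di}$, and let $V_{sink}$ be the set of sink members of $G_{di}$. If every correct process executes the Discovery algorithm, then every correct process $i$ eventually (a) discovers all sink members, i.e. $V_{sink}\cap C\subseteq \mathcal{S}_{known}$ at $i$ (the paper's proof in fact shows $V_{sink}\subseteq\mathcal{S}_{known}$), and (b) receives the participant detectors of all correct sink members, i.e. $V_{sink}\cap C\subseteq \mathcal{S}_{received}$ at $i$.
   Context: System model: a finite set $\Pi$ of processes with unique IDs (no Sybil attacks), partially synchronous: for every execution there exist an unknown time GST and a bound $\delta$ such that after GST every message between correct processes is delivered within $\delta$. A static set $F\subset\Pi$ of processes is Byzantine (arbitrary behavior, may collude); $C=\Pi\setminus F$ are the correct processes, and $|F|\le f$ for a fault threshold $f$. Channels are reliable and authenticated point-to-point, and processes can use unforgeable digital signatures; $\langle m\rangle_i$ denotes $m$ signed by $i$. Each process $i$ has a participant detector $PD_i\subseteq\Pi$ (the processes it initially knows); $i$ may send a message to $j$ only if $j$ is in $i$'s current set of known processes. The knowledge connectivity graph is the digraph $G_{di}=(\Pi,E_{di})$ with $(i,j)\in E_{di}$ iff $j\in PD_i$. Graph notions: a digraph is $k$-strongly connected if every ordered pair of distinct vertices is joined by $k$ internally node-disjoint directed paths; $\kappa(H)$ is the largest such $k$. A strongly connected component is a sink if no edge leaves it. A digraph belongs to $k$-OSR PD if (i) its underlying undirected graph is connected, (ii) its condensation (DAG of strongly connected components) has exactly one sink component $G_{sink}=(V_{sink},E_{sink})$, (iii) $G_{sink}$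 is $k$-strongly connected, and (iv) every vertex outside $V_{sink}$ has at least $k$ node-disjoint paths to every vertex of $V_{sink}$. The safe subgraph $G_{safe}$ is the subgraph of $G_{di}$ induced on $\Pi\setminus F$. $\mathcal{G}_{di}$ is the family of finite knowledge connectivity graphs whose safe subgraph belongs to $(f+1)$-OSR PD and whose safe sink component has at least $2f+1$ processes. The sink members of $G_{di}$ are the processes of the sink component of $G_{safe}$ together with the Byzantine processes belonging (in $G_{di}$) to the strongly connected component containing it. Discovery algorithm at process $i$: initialize $\mathcal{S}_{PD}=\{\langle i,PD_i\rangle_i\}$, $\mathcal{S}_{known}=PD_i\cup\{i\}$, $\mathcal{S}_{received}=\{i\}$. Periodically send $\langle\textsc{GetPDs}\rangle$ to every $j\in\mathcal{S}_{known}$. On receiving $\langle\textsc{GetPDs}\rangle$ from $j$, reply $\langle\textsc{SetPDs},\mathcal{S}_{PD}\rangle$. On receiving $\langle\textsc{SetPDs},pds_j\rangle$ from $j$: if $pds_j$ contains $\langle j,PD_j\rangle_j$ correctly signed by $j$, set $\mathcal{S}_{PD}\leftarrow\mathcal{S}_{PD}\cup pds_j$, add to $\mathcal{S}_{known}$ every process appearing in some signed PD in $pds_j$, and add to $\mathcal{S}_{received}$ every $k$ such that a PD signed by $k$ is in $pds_j$. *)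

theory Defs
  imports Main
begin

text \<open>A digraph is given by a vertex set V and an edge relation E (only edges
inside V are used).\<close>

definition dpath :: "'a set \<Rightarrow> ('a \<times> 'a) set \<Rightarrow> 'a \<Rightarrow> 'a \<Rightarrow> 'a list \<Rightarrow> bool" where
  "dpath V E u v p \<longleftrightarrow> p \<noteq> [] \<and> hd p = u \<and> last p = v \<and> distinct p \<and> set p \<subseteq> V \<and>
     (\<forall>n. Suc n < length p \<longrightarrow> (p ! n, p ! Suc n) \<in> E)"

definition interior :: "'a list \<Rightarrow> 'a set" where
  "interior p = set (butlast (tl p))"

definition k_disjoint_paths :: "nat \<Rightarrow> 'a set \<Rightarrow> ('a \<times> 'a) set \<Rightarrow> 'a \<Rightarrow> 'a \<Rightarrow> bool" where
  "k_disjoint_paths k V E u v \<longleftrightarrow>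
     (\<exists>P. finite P \<and> card P = k \<and> (\<forall>p\<in>P. dpath V E u v p) \<and>
          (\<forall>p\<in>P. \<forall>q\<in>P. p \<noteq> q \<longrightarrow> interior p \<inter> interior q = {}))"

definition k_strongly_connected :: "nat \<Rightarrow> 'a set \<Rightarrow> ('a \<times> 'a) set \<Rightarrow> bool" where
  "k_strongly_connected k V E \<longleftrightarrow>
     (\<forall>u\<in>V. \<forall>v\<in>V. u \<noteq> v \<longrightarrow> k_disjoint_paths k V E u v)"

definition reach :: "'a set \<Rightarrow> ('a \<times> 'a) set \<Rightarrow> 'a \<Rightarrow> 'a \<Rightarrow> bool" where
  "reach V E u v \<longleftrightarrow> (u, v) \<in> (E \<inter> V \<times> V)\<^sup>*"

definition scc_of :: "'a set \<Rightarrow> ('a \<times> 'a) set \<Rightarrow> 'a \<Rightarrow> 'a set" where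
  "scc_of V E x = {y \<in> V. reach V E x y \<and> reach V E y x}"

definition is_scc :: "'a set \<Rightarrow> ('a \<times> 'a) set \<Rightarrow> 'a set \<Rightarrow> bool" where
  "is_scc V E S \<longleftrightarrow> (\<exists>x\<in>V. S = scc_of V E x)"

definition is_sink_scc :: "'a set \<Rightarrow> ('a \<times> 'a) set \<Rightarrow> 'a set \<Rightarrow> bool" where
  "is_sink_scc V E S \<longleftrightarrow> is_scc V E S \<and> (\<forall>x\<in>S. \<forall>y\<in>V. (x, y) \<in> E \<longrightarrow> y \<in> S)"

definition weakly_connected :: "'a set \<Rightarrow> ('a \<times> 'a) set \<Rightarrow> bool" where
  "weakly_connected V E \<longleftrightarrow>
     (\<forall>u\<in>V. \<forall>v\<in>V. (u, v) \<in> ((E \<union> E\<inverse>) \<inter> V \<times> V)\<^sup>*)"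

text \<open>The (unique, when it exists) sink component.\<close>
definition sink_component :: "'a set \<Rightarrow> ('a \<times> 'a) set \<Rightarrow> 'a set" where
  "sink_component V E = (THE S. is_sink_scc V E S)"

definition k_OSR :: "nat \<Rightarrow> 'a set \<Rightarrow> ('a \<times> 'a) set \<Rightarrow> bool" where
  "k_OSR k V E \<longleftrightarrow>
     weakly_connected V E \<and>
     (\<exists>!S. is_sink_scc V E S) \<and>
     k_strongly_connected k (sink_component V E) (E \<inter> sink_component V E \<times> sink_component V E) \<and>
     (\<forall>u\<in>V - sink_component V E. \<forall>v\<in>sink_component V E. k_disjoint_paths k V E u v)"

text \<open>Processes are the elements of the finite type 'p (so \<Pi> = UNIV).
PD i is the participant detector of i; F is the set of Byzantine processes.\<close>

definition Edi :: "('p \<Rightarrow> 'p set) \<Rightarrow> ('p \<times> 'p) set" where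
  "Edi PD = {(i, j). j \<in> PD i}"

definition correct :: "'p set \<Rightarrow> 'p set" where
  "correct F = UNIV - F"

definition Esafe :: "('p \<Rightarrow> 'p set) \<Rightarrow> 'p set \<Rightarrow> ('p \<times> 'p) set" where
  "Esafe PD F = Edi PD \<inter> correct F \<times> correct F"

definition safe_sink :: "('p \<Rightarrow> 'p set) \<Rightarrow> 'p set \<Rightarrow> 'p set" where
  "safe_sink PD F = sink_component (correct F) (Esafe PD F)"

definition in_Gdi :: "nat \<Rightarrow> ('p::finite \<Rightarrow> 'p set) \<Rightarrow> 'p set \<Rightarrow> bool" where
  "in_Gdi f PD F \<longleftrightarrow>
     k_OSR (f + 1) (correct F) (Esafe PD F) \<and> card (safe_sink PD F) \<ge> 2 * f + 1"

definition sink_members :: "('p \<Rightarrow> 'p set) \<Rightarrow> 'p set \<Rightarrow> 'p set" where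
  "sink_members PD F =
     safe_sink PD F \<union>
     {b \<in> F. \<exists>c\<in>safe_sink PD F. b \<in> scc_of UNIV (Edi PD) c}"

text \<open>A signed participant detector \<langle>k, S\<rangle>_k is represented by the pair (k, S);
unforgeability of signatures is expressed by the constraint that an entry
(k, S) with k correct always has S = PD k (a correct process only ever signs
its own PD).

For each process i and time t:
  SPD i t, Sknown i t, Srec i t are the local variables S_PD, S_known, S_received
  (meaningful for correct i);
  deliv i j t is the set of payloads pds_j of SetPDs messages from j delivered
  to i at time t.\<close>

definition valid_setpds :: "'p \<Rightarrow> ('p \<times> 'p set) set \<Rightarrow> bool" where
  "valid_setpds j pds \<longleftrightarrow> (\<exists>S. (j, S) \<in> pds)"

definition discovery_execution ::
  "('p \<Rightarrow> 'p set) \<Rightarrow> 'p set \<Rightarrow>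
   ('p \<Rightarrow> nat \<Rightarrow> ('p \<times> 'p set) set) \<Rightarrow> ('p \<Rightarrow> nat \<Rightarrow> 'p set) \<Rightarrow> ('p \<Rightarrow> nat \<Rightarrow> 'p set) \<Rightarrow>
   ('p \<Rightarrow> 'p \<Rightarrow> nat \<Rightarrow> ('p \<times> 'p set) set set) \<Rightarrow> bool" where
  "discovery_execution PD F SPD Sknown Srec deliv \<longleftrightarrow>
    (\<forall>i\<in>correct F.
      \<comment> \<open>initialisation\<close>
      SPD i 0 = {(i, PD i)} \<and> Sknown i 0 = PD i \<union> {i} \<and> Srec i 0 = {i} \<and>
      \<comment> \<open>handling of the SetPDs messages delivered at time t\<close>
      (\<forall>t. SPD i (Suc t) = SPD i t \<union>
              \<Union>{pds. \<exists>j. pds \<in> deliv i j t \<and> valid_setpds j pds} \<and>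
           Sknown i (Suc t) = Sknown i t \<union>
              {x. \<exists>j pds k S. pds \<in> deliv i j t \<and> valid_setpds j pds \<and>
                              (k, S) \<in> pds \<and> (x = k \<or> x \<in> S)} \<and>
           Srec i (Suc t) = Srec i t \<union>
              {k. \<exists>j pds S. pds \<in> deliv i j t \<and> valid_setpds j pds \<and> (k, S) \<in> pds}) \<and>
      \<comment> \<open>a correct sender replies with its current S_PD (sent no later than delivery)\<close>
      (\<forall>j\<in>correct F. \<forall>t pds. pds \<in> deliv i j t \<longrightarrow> (\<exists>t'\<le>t. pds = SPD j t')) \<and>
      \<comment> \<open>Byzantine senders cannot forge signatures of correct processes\<close>
      (\<forall>j\<in>F. \<forall>t pds k S. pds \<in> deliv i j t \<longrightarrow> (k, S) \<in> pds \<longrightarrow> k \<in> correct F \<longrightarrow> S = PD k) \<and>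
      \<comment> \<open>liveness: i keeps sending GetPDs to every known process j; a correct j
          answers (with its S_PD at the time it receives the request) and the
          answer is eventually delivered (reliable channels, partial synchrony)\<close>
      (\<forall>j\<in>correct F. \<forall>t. j \<in> Sknown i t \<longrightarrow>
          (\<exists>t1 t2. t \<le> t1 \<and> t1 \<le> t2 \<and> SPD j t1 \<in> deliv i j t2)))"

end

theory Submission
  imports Defs
begin

text \<open>Knowledge spreads along edges between correct processes: once i knows a correct j,
j's reply, which always contains j's own signed PD, eventually reaches i, so i then knows PD j
and has received from j. In the safe subgraph every correct process has a path (one of the
f + 1 disjoint ones suffices) to each process of the safe sink, which contains every correct
sink member; following such a path, each of them is eventually known and received, and
finitely many eventualities hold jointly.\<close>

lemma reach_of_edge_chain:
  assumes "p \<noteq> []" "set p \<subseteq> V" "\<forall>n. Suc n < length p \<longrightarrow> (p ! n, p ! Suc n) \<in> E"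
  shows "reach V E (hd p) (last p)"
  using assms
proof (induction p)
  case Nil
  then show ?case by simp
next
  case (Cons x xs)
  show ?case
  proof (cases xs)
    case Nil
    then show ?thesis by (simp add: reach_def)
  next
    case (Cons y ys)
    have "(x, y) \<in> E \<inter> V \<times> V"
      using Cons.prems \<open>xs = y # ys\<close> by (fastforce dest: spec[of _ 0])
    moreover have "reach V E y (last xs)"
      using Cons.IH Cons.prems \<open>xs = y # ys\<close> by fastforce
    ultimately have "reach V E x (last xs)"
      unfolding reach_def by (blast intro: converse_rtrancl_into_rtrancl)
    then show ?thesis using \<open>xs = y # ys\<close> by simp
  qed
qed

lemma dpath_reach: "dpath V E u v p \<Longrightarrow> reach V E u v"
  unfolding dpath_def using reach_of_edge_chain by metis

lemma k_disjoint_paths_reach: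
  assumes "k > 0" "k_disjoint_paths k V E u v"
  shows "reach V E u v"
proof -
  obtain P where "finite P" "card P = k" "\<forall>p\<in>P. dpath V E u v p"
    using assms(2) unfolding k_disjoint_paths_def by blast
  moreover from \<open>card P = k\<close> \<open>k > 0\<close> have "P \<noteq> {}" by auto
  ultimately show ?thesis by (metis all_not_in_conv dpath_reach)
qed

lemma reach_closed:
  assumes "reach V E u v" "u \<in> V"
  shows "v \<in> V"
  using assms unfolding reach_def by (induction rule: rtrancl_induct) auto

lemma scc_of_reach:
  assumes "y \<in> scc_of V E x" "z \<in> scc_of V E x"
  shows "reach V E y z"
proof -
  have "reach V E y x" "reach V E x z" using assms unfolding scc_of_def by auto
  then show ?thesis unfolding reach_def by (rule rtrancl_trans)
qed

lemma sink_component_is_scc: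
  assumes "\<exists>!S. is_sink_scc V E S"
  shows "is_scc V E (sink_component V E)"
proof -
  have "is_sink_scc V E (sink_component V E)"
    unfolding sink_component_def using assms by (rule theI')
  then show ?thesis unfolding is_sink_scc_def by blast
qed

lemma k_OSR_reach_sink:
  assumes "k > 0" "k_OSR k V E" "u \<in> V" "v \<in> sink_component V E"
  shows "reach V E u v"
proof (cases "u \<in> sink_component V E")
  case True
  from assms(2) have "\<exists>!S. is_sink_scc V E S" by (simp add: k_OSR_def)
  then have "is_scc V E (sink_component V E)" by (rule sink_component_is_scc)
  then obtain x where "sink_component V E = scc_of V E x" unfolding is_scc_def by blast
  then show ?thesis using True assms(4) scc_of_reach by metis
next
  case False
  with assms(2-4) have "k_disjoint_paths k V E u v" by (simp add: k_OSR_def)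
  with assms(1) show ?thesis by (rule k_disjoint_paths_reach)
qed

lemma in_Gdi_reach_safe_sink:
  assumes "in_Gdi f PD F" "i \<in> correct F" "v \<in> safe_sink PD F"
  shows "reach (correct F) (Esafe PD F) i v"
  using assms k_OSR_reach_sink[of "f + 1" "correct F" "Esafe PD F" i v]
  unfolding in_Gdi_def safe_sink_def by simp

lemma correct_sink_members_safe_sink: "sink_members PD F \<inter> correct F \<subseteq> safe_sink PD F"
  unfolding sink_members_def correct_def by auto

lemma eventually_mem_mono:
  fixes X :: "nat \<Rightarrow> 'a set"
  assumes "mono X" "x \<in> X t"
  shows "\<forall>\<^sub>F t in sequentially. x \<in> X t"
  using assms by (auto simp: eventually_sequentially dest: monoD)

context
  fixes PD :: "'p \<Rightarrow> 'p set" and F :: "'p set"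
    and SPD :: "'p \<Rightarrow> nat \<Rightarrow> ('p \<times> 'p set) set"
    and Sknown Srec :: "'p \<Rightarrow> nat \<Rightarrow> 'p set"
    and deliv :: "'p \<Rightarrow> 'p \<Rightarrow> nat \<Rightarrow> ('p \<times> 'p set) set set"
  assumes exec: "discovery_execution PD F SPD Sknown Srec deliv"
begin

lemma discovery_init:
  assumes "i \<in> correct F"
  shows "SPD i 0 = {(i, PD i)}" "Sknown i 0 = PD i \<union> {i}" "Srec i 0 = {i}"
  using exec assms unfolding discovery_execution_def by auto

lemma discovery_step:
  assumes "i \<in> correct F"
  shows "SPD i (Suc t) = SPD i t \<union> \<Union>{pds. \<exists>j. pds \<in> deliv i j t \<and> valid_setpds j pds}"
    and "Sknown i (Suc t) = Sknown i t \<union>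
           {x. \<exists>j pds k S. pds \<in> deliv i j t \<and> valid_setpds j pds \<and> (k, S) \<in> pds \<and> (x = k \<or> x \<in> S)}"
    and "Srec i (Suc t) = Srec i t \<union>
           {k. \<exists>j pds S. pds \<in> deliv i j t \<and> valid_setpds j pds \<and> (k, S) \<in> pds}"
  using exec assms unfolding discovery_execution_def by auto

lemma discovery_liveness:
  assumes "i \<in> correct F" "j \<in> correct F" "j \<in> Sknown i t"
  shows "\<exists>t1 t2. t \<le> t1 \<and> t1 \<le> t2 \<and> SPD j t1 \<in> deliv i j t2"
  using exec assms unfolding discovery_execution_def by auto

lemma mono_SPD: "i \<in> correct F \<Longrightarrow> mono (SPD i)"
  unfolding mono_iff_le_Suc by (simp add: discovery_step)

lemma mono_Sknown: "i \<in> correct F \<Longrightarrow> mono (Sknown i)"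
  unfolding mono_iff_le_Suc by (simp add: discovery_step)

lemma mono_Srec: "i \<in> correct F \<Longrightarrow> mono (Srec i)"
  unfolding mono_iff_le_Suc by (simp add: discovery_step)

lemma own_PD_in_SPD: "j \<in> correct F \<Longrightarrow> (j, PD j) \<in> SPD j t"
  using monoD[OF mono_SPD, of j 0 t] discovery_init(1)[of j] by auto

lemma delivered_own_PD_known_received:
  assumes i: "i \<in> correct F" and j: "j \<in> correct F" and delivered: "SPD j t1 \<in> deliv i j t"
  shows "PD j \<subseteq> Sknown i (Suc t)" "j \<in> Srec i (Suc t)"
proof -
  have "(j, PD j) \<in> SPD j t1" "valid_setpds j (SPD j t1)"
    using own_PD_in_SPD[OF j] unfolding valid_setpds_def by blast+
  with delivered show "PD j \<subseteq> Sknown i (Suc t)" "j \<in> Srec i (Suc t)"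
    unfolding discovery_step[OF i] by blast+
qed

lemma known_eventually_known_received:
  assumes i: "i \<in> correct F" and j: "j \<in> correct F" and "j \<in> Sknown i t"
  shows "\<forall>\<^sub>F t in sequentially. PD j \<subseteq> Sknown i t \<and> j \<in> Srec i t"
proof -
  obtain t1 t2 where "SPD j t1 \<in> deliv i j t2"
    using discovery_liveness[OF assms] by blast
  note received = delivered_own_PD_known_received[OF i j this]
  show ?thesis
  proof (rule eventually_sequentiallyI)
    fix t assume "Suc t2 \<le> t"
    then show "PD j \<subseteq> Sknown i t \<and> j \<in> Srec i t"
      using received monoD[OF mono_Sknown[OF i]] monoD[OF mono_Srec[OF i]] by blast
  qed
qed

lemma reach_eventually_known:
  assumes i: "i \<in> correct F" and "reach (correct F) (Esafe PD F) i v"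
  shows "\<forall>\<^sub>F t in sequentially. v \<in> Sknown i t"
  using assms(2) unfolding reach_def
proof (induction rule: rtrancl_induct)
  case base
  have "i \<in> Sknown i 0" using discovery_init(2)[OF i] by blast
  then show ?case by (rule eventually_mem_mono[OF mono_Sknown[OF i]])
next
  case (step y z)
  then have y: "y \<in> correct F" and z: "z \<in> PD y" unfolding Esafe_def Edi_def by auto
  obtain t where "y \<in> Sknown i t"
    using eventually_happens'[OF sequentially_bot step.IH] by blast
  from known_eventually_known_received[OF i y this] show ?case
    by (rule eventually_mono) (use z in blast)
qed

lemma reach_eventually_known_received:
  assumes i: "i \<in> correct F" and reach: "reach (correct F) (Esafe PD F) i v"
  shows "\<forall>\<^sub>F t in sequentially. v \<in> Sknown i t \<and> v \<in> Srec i t"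
proof -
  have v: "v \<in> correct F" using reach_closed[OF reach i] .
  have known: "\<forall>\<^sub>F t in sequentially. v \<in> Sknown i t"
    using reach_eventually_known[OF i reach] .
  obtain t where "v \<in> Sknown i t" using eventually_happens'[OF sequentially_bot known] by blast
  from known_eventually_known_received[OF i v this]
  have "\<forall>\<^sub>F t in sequentially. v \<in> Srec i t" by (rule eventually_mono) blast
  with known show ?thesis by (rule eventually_conj)
qed

end

theorem theorem2:
  fixes f :: nat
    and PD :: "'p::finite \<Rightarrow> 'p set"
    and F :: "'p set"
    and SPD :: "'p \<Rightarrow> nat \<Rightarrow> ('p \<times> 'p set) set"
    and Sknown Srec :: "'p \<Rightarrow> nat \<Rightarrow> 'p set"
    and deliv :: "'p \<Rightarrow> 'p \<Rightarrow> nat \<Rightarrow> ('p \<times> 'p set) set set"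
  assumes "card F \<le> f"
    and "in_Gdi f PD F"
    and "discovery_execution PD F SPD Sknown Srec deliv"
    and "i \<in> correct F"
  shows "\<exists>T. \<forall>t\<ge>T. sink_members PD F \<inter> correct F \<subseteq> Sknown i t \<and>
                    sink_members PD F \<inter> correct F \<subseteq> Srec i t"
proof -
  have "\<forall>\<^sub>F t in sequentially. v \<in> Sknown i t \<and> v \<in> Srec i t" if "v \<in> safe_sink PD F" for v
    using reach_eventually_known_received[OF assms(3,4) in_Gdi_reach_safe_sink[OF assms(2,4) that]] .
  then have "\<forall>\<^sub>F t in sequentially. \<forall>v\<in>safe_sink PD F. v \<in> Sknown i t \<and> v \<in> Srec i t"
    by (simp add: eventually_ball_finite_distrib)
  then obtain T where "\<forall>t\<ge>T. safe_sink PD F \<subseteq> Sknown i t \<and> safe_sink PD F \<subseteq> Srec i t"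
    unfolding eventually_sequentially by blast
  with correct_sink_members_safe_sink show ?thesis by (meson order.trans)
qed

end
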